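(* Let $\mathcal{Q}=(Q,\leq^Q)$ with $Q=\{1,\dots,k\}$ and $\mathcal{P}=(P,\leq^P)$ be finite posets, let $(C_1,\dots,C_w)$ be any chain partition of $\mathcal{P}$, and let $f:Q\to\{1,\dots,w\}$ be arbitrary. Let $G=G(\mathcal{P},\mathcal{Q},f)$ be the graph whose vertex set is a disjoint union $V_1\,\dot\cup\cdots\dot\cup\, V_k$ where $V_i$ is a copy of $C_{f(i)}$, and where for $p\in V_i$, $q\in V_j$ being copies of $p'\in C_{f(i)}$, $q'\in C_{f(j)}$, we have $pq\in E(G)$ iff $i\neq j$ and both ($p'\leq^P q'$ iff $i\leq^Q j$) and ($p'\geq^P q'$ iff $i\geq^Q j$). Then $G$, with the colour classes $V_1,\dots,V_k$, contains a clique of size $|Q|$ if and only if $\mathcal{Q}$ has an embedding $e$ into $\mathcal{P}$ compatible with $f$ (i.e., $e(q)\in C_{f(q)}$ for all $q\in Q$).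
   Context: A chain partition of $\mathcal{P}$ is a partition of $P$ into chains (sets of pairwise comparable elements). An embedding from $\mathcal{Q}$ into $\mathcal{P}$ is an injective function $e:Q\to P$ such that $q\leq^Q q'$ iff $e(q)\leq^P e(q')$ for all $q,q'\in Q$. A clique is a set of pairwise adjacent vertices. *)

theory Defs
  imports Main
begin

definition is_chain :: "('a \<times> 'a) set \<Rightarrow> 'a set \<Rightarrow> bool" where
  "is_chain leP C \<longleftrightarrow> (\<forall>x\<in>C. \<forall>y\<in>C. (x, y) \<in> leP \<or> (y, x) \<in> leP)"

definition chain_partition ::
  "'a set \<Rightarrow> ('a \<times> 'a) set \<Rightarrow> nat \<Rightarrow> (nat \<Rightarrow> 'a set) \<Rightarrow> bool" where
  "chain_partition P leP w C \<longleftrightarrow>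
     (\<Union>i\<in>{1..w}. C i) = P \<and>
     (\<forall>i\<in>{1..w}. C i \<noteq> {} \<and> is_chain leP (C i)) \<and>
     (\<forall>i\<in>{1..w}. \<forall>j\<in>{1..w}. i \<noteq> j \<longrightarrow> C i \<inter> C j = {})"

definition G_vertices :: "nat \<Rightarrow> (nat \<Rightarrow> 'a set) \<Rightarrow> (nat \<Rightarrow> nat) \<Rightarrow> (nat \<times> 'a) set" where
  "G_vertices k C f = (SIGMA i:{1..k}. C (f i))"

definition G_adj ::
  "('a \<times> 'a) set \<Rightarrow> (nat \<times> nat) set \<Rightarrow> nat \<times> 'a \<Rightarrow> nat \<times> 'a \<Rightarrow> bool" where
  "G_adj leP leQ u v \<longleftrightarrow>
     (case u of (i, p) \<Rightarrow> case v of (j, q) \<Rightarrow>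
       i \<noteq> j \<and> (((p, q) \<in> leP) \<longleftrightarrow> ((i, j) \<in> leQ))
             \<and> (((q, p) \<in> leP) \<longleftrightarrow> ((j, i) \<in> leQ)))"

definition is_clique :: "('v \<Rightarrow> 'v \<Rightarrow> bool) \<Rightarrow> 'v set \<Rightarrow> 'v set \<Rightarrow> bool" where
  "is_clique E V K \<longleftrightarrow> K \<subseteq> V \<and> (\<forall>u\<in>K. \<forall>v\<in>K. u \<noteq> v \<longrightarrow> E u v)"

definition is_embedding ::
  "'q set \<Rightarrow> ('q \<times> 'q) set \<Rightarrow> 'a set \<Rightarrow> ('a \<times> 'a) set \<Rightarrow> ('q \<Rightarrow> 'a) \<Rightarrow> bool" where
  "is_embedding Q leQ P leP e \<longleftrightarrow>
     e ` Q \<subseteq> P \<and> inj_on e Q \<and>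
     (\<forall>q\<in>Q. \<forall>q'\<in>Q. (q, q') \<in> leQ \<longleftrightarrow> (e q, e q') \<in> leP)"

end

theory Submission
  imports Defs
begin

text \<open>Adjacent vertices of G lie in different colour classes, so a clique meets each class
  at most once; a clique of size k therefore picks exactly one vertex from every class and
  is the graph of a map e with e i \<in> C (f i). For such a graph, being a clique says precisely
  that e preserves and reflects the order between distinct points of Q, and by reflexivity
  and antisymmetry this is the same as e being an embedding.\<close>

lemma G_adj_fst_neq: "G_adj leP leQ u v \<Longrightarrow> fst u \<noteq> fst v"
  unfolding G_adj_def by (cases u; cases v) auto

lemma clique_inj_on_fst: "is_clique (G_adj leP leQ) V K \<Longrightarrow> inj_on fst K"
  unfolding is_clique_def by (metis G_adj_fst_neq inj_onI)

lemma clique_card_eq_graph: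
  assumes "is_clique (G_adj leP leQ) (G_vertices k C f) K" and "card K = k"
  obtains e where "K = (\<lambda>i. (i, e i)) ` {1..k}" and "\<forall>i\<in>{1..k}. e i \<in> C (f i)"
proof -
  have inj: "inj_on fst K"
    using assms(1) by (rule clique_inj_on_fst)
  have sub: "fst ` K \<subseteq> {1..k}"
    using assms(1) unfolding is_clique_def G_vertices_def by auto
  have "card (fst ` K) = k"
    using card_image[OF inj] assms(2) by simp
  then have fst_K: "fst ` K = {1..k}"
    using sub by (intro card_subset_eq) auto
  define e where "e = snd \<circ> the_inv_into K fst"
  have "u = (fst u, e (fst u))" if "u \<in> K" for u
    using the_inv_into_f_f[OF inj that] by (simp add: e_def)
  then have graph: "K = (\<lambda>i. (i, e i)) ` {1..k}"
    unfolding fst_K[symmetric] by force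
  moreover have "\<forall>i\<in>{1..k}. e i \<in> C (f i)"
    using assms(1) unfolding graph is_clique_def G_vertices_def by auto
  ultimately show thesis
    by (rule that)
qed

lemma card_graph: "card ((\<lambda>i. (i, e i)) ` A) = card A"
  by (rule card_image) (auto intro: inj_onI)

lemma graph_is_clique_iff:
  assumes "\<forall>i\<in>{1..k}. e i \<in> C (f i)"
  shows "is_clique (G_adj leP leQ) (G_vertices k C f) ((\<lambda>i. (i, e i)) ` {1..k})
    \<longleftrightarrow> (\<forall>i\<in>{1..k}. \<forall>j\<in>{1..k}. i \<noteq> j \<longrightarrow> ((i, j) \<in> leQ \<longleftrightarrow> (e i, e j) \<in> leP))"
  using assms unfolding is_clique_def G_vertices_def G_adj_def by auto

lemma is_embedding_iff_off_diagonal: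
  assumes "refl_on Q leQ" and "antisym_on Q leQ" and "refl_on P leP" and "e ` Q \<subseteq> P"
  shows "is_embedding Q leQ P leP e
    \<longleftrightarrow> (\<forall>q\<in>Q. \<forall>q'\<in>Q. q \<noteq> q' \<longrightarrow> ((q, q') \<in> leQ \<longleftrightarrow> (e q, e q') \<in> leP))"
    (is "_ \<longleftrightarrow> ?off_diagonal")
proof
  assume ?off_diagonal
  have order: "\<forall>q\<in>Q. \<forall>q'\<in>Q. (q, q') \<in> leQ \<longleftrightarrow> (e q, e q') \<in> leP"
  proof (intro ballI)
    fix q q' assume "q \<in> Q" "q' \<in> Q"
    with \<open>?off_diagonal\<close> assms(1,3,4) show "(q, q') \<in> leQ \<longleftrightarrow> (e q, e q') \<in> leP"
      by (cases "q = q'") (auto simp: refl_on_def)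
  qed
  have "inj_on e Q"
  proof (rule inj_onI)
    fix q q' assume "q \<in> Q" "q' \<in> Q" "e q = e q'"
    with order assms(3,4) have "(q, q') \<in> leQ" "(q', q) \<in> leQ"
      by (auto simp: refl_on_def)
    with \<open>q \<in> Q\<close> \<open>q' \<in> Q\<close> show "q = q'"
      using assms(2) by (simp add: antisym_onD)
  qed
  with order assms(4) show "is_embedding Q leQ P leP e"
    unfolding is_embedding_def by blast
qed (auto simp: is_embedding_def)

theorem proposition4p1:
  fixes k w :: nat and leQ :: "(nat \<times> nat) set"
    and P :: "'a set" and leP :: "('a \<times> 'a) set"
    and C :: "nat \<Rightarrow> 'a set" and f :: "nat \<Rightarrow> nat"
  assumes "partial_order_on {1..k} leQ"
    and "finite P" and "partial_order_on P leP"
    and "chain_partition P leP w C"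
    and "\<forall>i\<in>{1..k}. f i \<in> {1..w}"
  shows "(\<exists>K. is_clique (G_adj leP leQ) (G_vertices k C f) K \<and> card K = k)
     \<longleftrightarrow> (\<exists>e. is_embedding {1..k} leQ P leP e \<and> (\<forall>q\<in>{1..k}. e q \<in> C (f q)))"
proof -
  have chains_in_P: "C (f i) \<subseteq> P" if "i \<in> {1..k}" for i
    using assms(4,5) that unfolding chain_partition_def by blast
  have antisym_Q: "antisym_on {1..k} leQ"
    using partial_order_onD(3)[OF assms(1)] by (simp add: antisym_on_def)
  have embedding_iff: "is_embedding {1..k} leQ P leP e
      \<longleftrightarrow> (\<forall>i\<in>{1..k}. \<forall>j\<in>{1..k}. i \<noteq> j \<longrightarrow> ((i, j) \<in> leQ \<longleftrightarrow> (e i, e j) \<in> leP))"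
    if "\<forall>i\<in>{1..k}. e i \<in> C (f i)" for e
  proof (rule is_embedding_iff_off_diagonal)
    show "e ` {1..k} \<subseteq> P"
      using that chains_in_P by blast
  qed (fact partial_order_onD(1)[OF assms(1)] antisym_Q partial_order_onD(1)[OF assms(3)])+
  show ?thesis
  proof
    assume "\<exists>K. is_clique (G_adj leP leQ) (G_vertices k C f) K \<and> card K = k"
    then obtain K where "is_clique (G_adj leP leQ) (G_vertices k C f) K" "card K = k"
      by blast
    then obtain e where K: "K = (\<lambda>i. (i, e i)) ` {1..k}" and e: "\<forall>i\<in>{1..k}. e i \<in> C (f i)"
      by (rule clique_card_eq_graph)
    from \<open>is_clique _ _ K\<close> have "is_embedding {1..k} leQ P leP e"
      unfolding K graph_is_clique_iff[where C = C and f = f, OF e] embedding_iff[OF e] .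
    with e show "\<exists>e. is_embedding {1..k} leQ P leP e \<and> (\<forall>q\<in>{1..k}. e q \<in> C (f q))"
      by blast
  next
    assume "\<exists>e. is_embedding {1..k} leQ P leP e \<and> (\<forall>q\<in>{1..k}. e q \<in> C (f q))"
    then obtain e where emb: "is_embedding {1..k} leQ P leP e" and e: "\<forall>i\<in>{1..k}. e i \<in> C (f i)"
      by blast
    from emb have "is_clique (G_adj leP leQ) (G_vertices k C f) ((\<lambda>i. (i, e i)) ` {1..k})"
      unfolding graph_is_clique_iff[where C = C and f = f, OF e] embedding_iff[OF e] .
    then show "\<exists>K. is_clique (G_adj leP leQ) (G_vertices k C f) K \<and> card K = k"
      using card_graph[of e "{1..k}"] by auto
  qed
qed

end
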